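(* Assume $b_0\neq 0$. Then $$X(b_0)=\bigcup_{n\in\mathbb{Z}} (t^n,t^{-n})\cdot M(b_0)(\mathcal{O}_{\overline{E}}).$$ In particular, if $b_0\notin \mathcal{O}_{\overline{E}}$ then $X(b_0)=\emptyset$.
   Context: Let $\overline{E}$ be a nonarchimedean local field with ring of integers $\mathcal{O}_{\overline{E}}$ and residue field $k$ of characteristic $\neq 2$, and let $t\in\mathcal{O}_{\overline{E}}$ be a uniformizer. Consider the split quadratic extension $\overline{K}=\overline{E}\oplus\overline{E}$. For $b_0\in\overline{E}$, let $M(b_0)$ denote the set of pairs of column vectors $x=(x_1,x_2)^T$, $y=(y_1,y_2)^T$ in $\overline{E}^2$ with $\det(x,y)=x_1y_2-x_2y_1=b_0$ (i.e. $2\times 2$ matrices with columns $x,y$ and determinant $b_0$), and $M(b_0)(\mathcal{O}_{\overline{E}})$ the subset of such pairs with all entries in $\mathcal{O}_{\overline{E}}$. Let $X(b_0)\subset M(b_0)$ be the subset of $(x,y)$ such that $x_1x_2\in\mathcal{O}_{\overline{E}}$, $y_1y_2\in\mathcal{O}_{\overline{E}}$ and $x_1y_2+x_2y_1\in\mathcal{O}_{\overline{E}}$. The element $(t^n,t^{-n})\in \overline{K}^*$ (of norm $1$) acts on $M(b_0)$ by $(x_1,x_2,y_1,y_2)\mapsto (t^nx_1,t^{-n}x_2,t^ny_1,t^{-n}y_2)$. *)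

theory Defs
  imports Main
begin

text \<open>A normalized discrete valuation on a field, given on nonzero elements
  (the value at 0 is irrelevant; 0 is treated as having valuation +infinity).\<close>
definition discrete_valuation :: "('a::field \<Rightarrow> int) \<Rightarrow> bool" where
  "discrete_valuation v \<longleftrightarrow>
     (\<forall>x y. x \<noteq> 0 \<longrightarrow> y \<noteq> 0 \<longrightarrow> v (x * y) = v x + v y) \<and>
     (\<forall>x y. x \<noteq> 0 \<longrightarrow> y \<noteq> 0 \<longrightarrow> x + y \<noteq> 0 \<longrightarrow> min (v x) (v y) \<le> v (x + y)) \<and>
     (\<exists>t. t \<noteq> 0 \<and> v t = 1)"

definition val_ge :: "('a::field \<Rightarrow> int) \<Rightarrow> int \<Rightarrow> 'a set" where
  "val_ge v N = {x. x = 0 \<or> N \<le> v x}"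

definition ring_of_integers :: "('a::field \<Rightarrow> int) \<Rightarrow> 'a set" where
  "ring_of_integers v = val_ge v 0"

definition val_complete :: "('a::field \<Rightarrow> int) \<Rightarrow> bool" where
  "val_complete v \<longleftrightarrow>
     (\<forall>X :: nat \<Rightarrow> 'a.
        (\<forall>N. \<exists>M. \<forall>m\<ge>M. \<forall>n\<ge>M. X m - X n \<in> val_ge v N) \<longrightarrow>
        (\<exists>L. \<forall>N. \<exists>M. \<forall>n\<ge>M. X n - L \<in> val_ge v N))"

definition finite_residue_field :: "('a::field \<Rightarrow> int) \<Rightarrow> bool" where
  "finite_residue_field v \<longleftrightarrow>
     (\<exists>S. finite S \<and> S \<subseteq> ring_of_integers v \<and>
          (\<forall>x\<in>ring_of_integers v. \<exists>s\<in>S. x - s \<in> val_ge v 1))"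

text \<open>Residue characteristic different from 2: 2 is a unit of the ring of integers.\<close>
definition residue_char_not_2 :: "('a::field \<Rightarrow> int) \<Rightarrow> bool" where
  "residue_char_not_2 v \<longleftrightarrow> (2::'a) \<noteq> 0 \<and> v 2 = 0"

definition nonarch_local_field :: "('a::field \<Rightarrow> int) \<Rightarrow> bool" where
  "nonarch_local_field v \<longleftrightarrow> discrete_valuation v \<and> val_complete v \<and> finite_residue_field v"

definition uniformizer :: "('a::field \<Rightarrow> int) \<Rightarrow> 'a \<Rightarrow> bool" where
  "uniformizer v t \<longleftrightarrow> t \<noteq> 0 \<and> v t = 1"

text \<open>Pairs of column vectors x = (x1,x2), y = (y1,y2), encoded as (x1,x2,y1,y2).\<close>
definition Mset :: "'a::field \<Rightarrow> ('a \<times> 'a \<times> 'a \<times> 'a) set" where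
  "Mset b0 = {(x1, x2, y1, y2). x1 * y2 - x2 * y1 = b0}"

definition Mset_int :: "('a::field \<Rightarrow> int) \<Rightarrow> 'a \<Rightarrow> ('a \<times> 'a \<times> 'a \<times> 'a) set" where
  "Mset_int v b0 = {(x1, x2, y1, y2) \<in> Mset b0.
      x1 \<in> ring_of_integers v \<and> x2 \<in> ring_of_integers v \<and>
      y1 \<in> ring_of_integers v \<and> y2 \<in> ring_of_integers v}"

definition Xset :: "('a::field \<Rightarrow> int) \<Rightarrow> 'a \<Rightarrow> ('a \<times> 'a \<times> 'a \<times> 'a) set" where
  "Xset v b0 = {(x1, x2, y1, y2) \<in> Mset b0.
      x1 * x2 \<in> ring_of_integers v \<and> y1 * y2 \<in> ring_of_integers v \<and>
      x1 * y2 + x2 * y1 \<in> ring_of_integers v}"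

definition tact :: "'a::field \<Rightarrow> int \<Rightarrow> 'a \<times> 'a \<times> 'a \<times> 'a \<Rightarrow> 'a \<times> 'a \<times> 'a \<times> 'a" where
  "tact t n = (\<lambda>(x1, x2, y1, y2).
      (t powi n * x1, t powi (-n) * x2, t powi n * y1, t powi (-n) * y2))"

end

theory Submission
  imports Defs
begin

text \<open>With \<open>s = x\<^sub>1 y\<^sub>2 + x\<^sub>2 y\<^sub>1\<close> one has \<open>b\<^sub>0\<^sup>2 = s\<^sup>2 - 4 (x\<^sub>1 x\<^sub>2)(y\<^sub>1 y\<^sub>2)\<close>, so on
  \<open>X(b\<^sub>0)\<close> the determinant \<open>b\<^sub>0\<close> is integral, and since 2 is a unit so are
  \<open>x\<^sub>1 y\<^sub>2 = (s + b\<^sub>0)/2\<close> and \<open>x\<^sub>2 y\<^sub>1 = (s - b\<^sub>0)/2\<close>. Hence each of \<open>x\<^sub>1, y\<^sub>1\<close> times each of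
  \<open>x\<^sub>2, y\<^sub>2\<close> is integral, and rescaling by \<open>t\<^sup>-\<^sup>n\<close> resp. \<open>t\<^sup>n\<close>, where \<open>n\<close> is the least
  valuation of a nonzero one among \<open>x\<^sub>1, y\<^sub>1\<close>, makes all four entries integral.
  Conversely the action leaves these four products unchanged.\<close>

context
  fixes v :: "'a::field \<Rightarrow> int"
  assumes dv: "discrete_valuation v"
begin

lemma valuation_mult: "x \<noteq> 0 \<Longrightarrow> y \<noteq> 0 \<Longrightarrow> v (x * y) = v x + v y"
  using dv unfolding discrete_valuation_def by blast

lemma valuation_add: "x \<noteq> 0 \<Longrightarrow> y \<noteq> 0 \<Longrightarrow> x + y \<noteq> 0 \<Longrightarrow> min (v x) (v y) \<le> v (x + y)"
  using dv unfolding discrete_valuation_def by blast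

lemma valuation_one: "v 1 = 0"
  using valuation_mult[of 1 1] by simp

lemma valuation_inverse: "x \<noteq> 0 \<Longrightarrow> v (inverse x) = - v x"
  using valuation_mult[of x "inverse x"] valuation_one by simp

lemma valuation_uminus: "x \<noteq> 0 \<Longrightarrow> v (- x) = v x"
  using valuation_mult[of x x] valuation_mult[of "- x" "- x"] by simp

lemma valuation_power: "t \<noteq> 0 \<Longrightarrow> v (t ^ k) = int k * v t"
  by (induction k) (simp_all add: valuation_one valuation_mult algebra_simps)

lemma valuation_power_int: "t \<noteq> 0 \<Longrightarrow> v (t powi m) = m * v t"
  by (cases m rule: int_cases2)
     (simp_all add: valuation_power valuation_inverse power_int_minus)

lemma mem_ring_of_integers_iff: "x \<in> ring_of_integers v \<longleftrightarrow> x = 0 \<or> 0 \<le> v x"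
  unfolding ring_of_integers_def val_ge_def by simp

lemma mult_mem_ring_of_integers_iff:
  "x \<noteq> 0 \<Longrightarrow> y \<noteq> 0 \<Longrightarrow> x * y \<in> ring_of_integers v \<longleftrightarrow> 0 \<le> v x + v y"
  by (simp add: mem_ring_of_integers_iff valuation_mult)

lemma ring_of_integers_mult:
  "x \<in> ring_of_integers v \<Longrightarrow> y \<in> ring_of_integers v \<Longrightarrow> x * y \<in> ring_of_integers v"
  by (cases "x = 0 \<or> y = 0") (auto simp: mem_ring_of_integers_iff valuation_mult)

lemma ring_of_integers_add:
  "x \<in> ring_of_integers v \<Longrightarrow> y \<in> ring_of_integers v \<Longrightarrow> x + y \<in> ring_of_integers v"
  unfolding mem_ring_of_integers_iff using valuation_add[of x y] by fastforce

lemma ring_of_integers_uminus: "x \<in> ring_of_integers v \<Longrightarrow> - x \<in> ring_of_integers v"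
  by (cases "x = 0") (auto simp: mem_ring_of_integers_iff valuation_uminus)

lemma ring_of_integers_diff:
  "x \<in> ring_of_integers v \<Longrightarrow> y \<in> ring_of_integers v \<Longrightarrow> x - y \<in> ring_of_integers v"
  using ring_of_integers_add[of x "- y"] ring_of_integers_uminus[of y] by simp

lemma ring_of_integers_if_square: "x * x \<in> ring_of_integers v \<Longrightarrow> x \<in> ring_of_integers v"
  by (cases "x = 0") (auto simp: mem_ring_of_integers_iff valuation_mult)

lemma inverse_two_mem_ring_of_integers:
  "residue_char_not_2 v \<Longrightarrow> inverse 2 \<in> ring_of_integers v"
  using valuation_inverse[of 2]
  by (simp add: residue_char_not_2_def mem_ring_of_integers_iff del: inverse_eq_divide)

lemma Xset_cross_products_integral:
  assumes "residue_char_not_2 v" and "(x1, x2, y1, y2) \<in> Xset v b0"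
  shows "b0 \<in> ring_of_integers v" and "x1 * y2 \<in> ring_of_integers v"
    and "x2 * y1 \<in> ring_of_integers v"
proof -
  define s where "s = x1 * y2 + x2 * y1"
  have det: "x1 * y2 - x2 * y1 = b0" and s: "s \<in> ring_of_integers v"
    and x: "x1 * x2 \<in> ring_of_integers v" and y: "y1 * y2 \<in> ring_of_integers v"
    using assms(2) unfolding Xset_def Mset_def s_def by auto
  have four: "4 \<in> ring_of_integers v"
    using ring_of_integers_mult[of 2 2] assms(1)
    by (simp add: residue_char_not_2_def mem_ring_of_integers_iff)
  have "b0 * b0 = s * s - 4 * ((x1 * x2) * (y1 * y2))"
    unfolding s_def det[symmetric] by (simp add: algebra_simps)
  then have "b0 * b0 \<in> ring_of_integers v"
    by (simp add: ring_of_integers_diff ring_of_integers_mult s four x y)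
  then show b0: "b0 \<in> ring_of_integers v"
    by (rule ring_of_integers_if_square)
  have two: "(2::'a) \<noteq> 0"
    using assms(1) unfolding residue_char_not_2_def by simp
  have half: "x1 * y2 = inverse 2 * (s + b0)" "x2 * y1 = inverse 2 * (s - b0)"
    unfolding s_def det[symmetric] using two by (simp_all add: field_simps)
  have half_integral: "inverse 2 \<in> ring_of_integers v"
    using assms(1) by (rule inverse_two_mem_ring_of_integers)
  show "x1 * y2 \<in> ring_of_integers v"
    unfolding half by (rule ring_of_integers_mult[OF half_integral ring_of_integers_add[OF s b0]])
  show "x2 * y1 \<in> ring_of_integers v"
    unfolding half by (rule ring_of_integers_mult[OF half_integral ring_of_integers_diff[OF s b0]])
qed

lemma Mset_int_subset_Xset: "Mset_int v b0 \<subseteq> Xset v b0"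
  unfolding Mset_int_def Xset_def
  by (auto simp: ring_of_integers_mult ring_of_integers_add)

lemma exists_integral_rescaling:
  assumes "uniformizer v t" and "a \<noteq> 0 \<or> b \<noteq> 0"
    and "a * c \<in> ring_of_integers v" and "a * d \<in> ring_of_integers v"
    and "b * c \<in> ring_of_integers v" and "b * d \<in> ring_of_integers v"
  obtains n where "t powi (-n) * a \<in> ring_of_integers v" and "t powi (-n) * b \<in> ring_of_integers v"
    and "t powi n * c \<in> ring_of_integers v" and "t powi n * d \<in> ring_of_integers v"
proof -
  have t: "t \<noteq> 0" "v t = 1"
    using assms(1) unfolding uniformizer_def by auto
  have scaled: "t powi k * x \<in> ring_of_integers v \<longleftrightarrow> x = 0 \<or> 0 \<le> k + v x" for k x
    using t by (cases "x = 0") (simp_all add: mem_ring_of_integers_iff valuation_mult valuation_power_int)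
  obtain u where u: "u \<in> {a, b}" "u \<noteq> 0" and u_min: "\<And>w. w \<in> {a, b} \<Longrightarrow> w \<noteq> 0 \<Longrightarrow> v u \<le> v w"
  proof (cases "b \<noteq> 0 \<and> (a = 0 \<or> v b < v a)")
    case True
    then show thesis by (intro that[of b]) auto
  next
    case False
    then show thesis using assms(2) by (intro that[of a]) auto
  qed
  have "0 \<le> v u + v w" if "w \<in> {c, d}" "w \<noteq> 0" for w
    using u that assms(3-6) mult_mem_ring_of_integers_iff[of u w] by auto
  then show thesis
    using u_min by (intro that[of "v u"]) (auto simp: scaled)
qed

end

lemma tact_apply:
  "tact t n (x1, x2, y1, y2) = (t powi n * x1, t powi (-n) * x2, t powi n * y1, t powi (-n) * y2)"
  by (simp add: tact_def)

lemma tact_tact: "t \<noteq> 0 \<Longrightarrow> tact t m (tact t n p) = tact t (m + n) p"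
  by (cases p) (simp add: tact_apply mult.assoc power_int_add[symmetric])

lemma tact_zero: "tact t 0 p = p"
  by (cases p) (simp add: tact_apply)

lemma tact_tact_uminus: "t \<noteq> 0 \<Longrightarrow> tact t n (tact t (-n) p) = p"
  by (simp add: tact_tact tact_zero)

lemma power_int_mult_cancel:
  fixes t :: "'a::field"
  assumes "t \<noteq> 0"
  shows "t powi n * x * (t powi (-n) * y) = x * y" and "t powi (-n) * x * (t powi n * y) = x * y"
  using assms by (simp_all add: power_int_minus field_simps)

lemma tact_mem_Mset: "t \<noteq> 0 \<Longrightarrow> p \<in> Mset b0 \<Longrightarrow> tact t n p \<in> Mset b0"
  by (cases p) (simp add: tact_apply Mset_def power_int_mult_cancel)

lemma tact_mem_Xset: "t \<noteq> 0 \<Longrightarrow> p \<in> Xset v b0 \<Longrightarrow> tact t n p \<in> Xset v b0"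
  by (cases p) (simp add: tact_apply Xset_def Mset_def power_int_mult_cancel)

lemma Xset_subset_orbit_Mset_int:
  assumes dv: "discrete_valuation v" and char: "residue_char_not_2 v"
    and t: "uniformizer v t" and b0: "b0 \<noteq> 0"
  shows "Xset v b0 \<subseteq> (\<Union>n. tact t n ` Mset_int v b0)"
proof
  fix p assume "p \<in> Xset v b0"
  moreover obtain x1 x2 y1 y2 where p: "p = (x1, x2, y1, y2)"
    by (cases p)
  ultimately have X: "(x1, x2, y1, y2) \<in> Xset v b0"
    by simp
  then have det: "x1 * y2 - x2 * y1 = b0" and "x1 * x2 \<in> ring_of_integers v"
    and "y1 * y2 \<in> ring_of_integers v"
    unfolding Xset_def Mset_def by auto
  moreover have "x1 * y2 \<in> ring_of_integers v" and "y1 * x2 \<in> ring_of_integers v"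
    using Xset_cross_products_integral[OF dv char X] by (simp_all add: mult.commute)
  moreover have "x1 \<noteq> 0 \<or> y1 \<noteq> 0"
    using det b0 by auto
  ultimately obtain n where "t powi (-n) * x1 \<in> ring_of_integers v"
    "t powi (-n) * y1 \<in> ring_of_integers v" "t powi n * x2 \<in> ring_of_integers v"
    "t powi n * y2 \<in> ring_of_integers v"
    using exists_integral_rescaling[OF dv t] by metis
  moreover have t0: "t \<noteq> 0"
    using t unfolding uniformizer_def by simp
  ultimately have "tact t (-n) p \<in> Mset_int v b0"
    using tact_mem_Mset[OF t0, of p b0 "-n"] X
    unfolding Mset_int_def Xset_def p by (simp add: tact_apply)
  then show "p \<in> (\<Union>n. tact t n ` Mset_int v b0)"
    using tact_tact_uminus[OF t0, of n p] by (metis UN_iff UNIV_I image_eqI)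
qed

theorem lemma4p12:
  fixes v :: "'a::field \<Rightarrow> int" and t b0 :: 'a
  assumes "nonarch_local_field v"
    and "residue_char_not_2 v"
    and "uniformizer v t"
    and "b0 \<noteq> 0"
  shows "Xset v b0 = (\<Union>n::int. tact t n ` Mset_int v b0)
     \<and> (b0 \<notin> ring_of_integers v \<longrightarrow> Xset v b0 = {})"
proof -
  have dv: "discrete_valuation v"
    using assms(1) unfolding nonarch_local_field_def by simp
  have "t \<noteq> 0"
    using assms(3) unfolding uniformizer_def by simp
  then have "(\<Union>n. tact t n ` Mset_int v b0) \<subseteq> Xset v b0"
    using Mset_int_subset_Xset[OF dv] tact_mem_Xset by blast
  moreover have "Xset v b0 \<subseteq> (\<Union>n. tact t n ` Mset_int v b0)"
    using dv assms(2-4) by (rule Xset_subset_orbit_Mset_int)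
  moreover have "b0 \<in> ring_of_integers v" if "p \<in> Xset v b0" for p
    using that Xset_cross_products_integral(1)[OF dv assms(2)] by (cases p) blast
  ultimately show ?thesis
    by blast
qed

end
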